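(* Let $q>1$, $0\le M_0<M$, let $u$ be a sufficiently smooth $L$-periodic solution of $u_t=-\alpha uu_x+\beta u_{xxx}$ on $[0,T]\times\mathbb{R}$, and $r>\sup_{t,x}|u(t,x)|$. Assume $u^{(0)}_k=u(0,k\Delta x)$, that $u^{(0)},\dots,u^{(M_0)}$ are obtained successively as solutions of the scheme, that $r\ge\max_{m'\le M_0}\|u^{(m')}\|_\infty$, that $\Delta t<\min\{\varepsilon_1(q,r,\Delta x),\varepsilon_2(q,r,\Delta x)\}$, and let $u^{(M_0+1)}$ be the solution of the scheme at step $M_0$ with $\|u^{(M_0+1)}\|_\infty\le qr$. Let $C(q,r)>0$ be a constant, independent of $\Delta t$ and $\Delta x$, such that for sufficiently small $\Delta t\le\Delta x$ one has $\|e^{(m)}\|_{H^1}\le C(q,r)((\Delta t)^2+(\Delta x)^2)$ for $m=0,\dots,M_0+1$, and let $\Delta t\le \Delta x$ be that small. If $$\Delta x\le\left(\frac{r-\sup_{(t,x)\in[0,T]\times[0,L]}|u(t,x)|}{2\hat L\,C(q,r)}\right)^{1/2},\qquad \hat L=\sqrt2\max\{\sqrt L,1/\sqrt L\},$$ then $\|u^{(m)}\|_\infty\le r$ for $m=0,1,\dots,M_0+1$.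
   Context: $L>0$, $K\in\mathbb{N}$, $\Delta x=L/K$; $T>0$, $M\in\mathbb{N}$, $\Delta t=T/M$; $\alpha\in\mathbb{R}$, $\beta\ne0$. Grid functions are $K$-periodic real sequences. $\delta^+_x v_k=(v_{k+1}-v_k)/\Delta x$, $\delta^{\langle 1\rangle}_x v_k = (v_{k+1}-v_{k-1})/(2\Delta x)$, $\delta^{\langle 2\rangle}_x v_k = (v_{k+1}-2v_k+v_{k-1})/(\Delta x)^2$, $\|v\|=(\sum_{k=1}^K v_k^2\Delta x)^{1/2}$, $\|v\|_\infty=\max_k|v_k|$, $\|v\|_{H^1}=(\|v\|^2+\|\delta^+_xv\|^2)^{1/2}$; $\delta^+_t v^{(n)}=(v^{(n+1)}-v^{(n)})/\Delta t$, $\mu^+_t v^{(n)}=(v^{(n+1)}+v^{(n)})/2$. The scheme: $u^{(n+1)}$ solves it at step $n$ if $\delta^+_t u^{(n)}_k = -\frac{\alpha}{6}\delta^{\langle 1\rangle}_x\{(u^{(n+1)}_k)^2 + u^{(n+1)}_k u^{(n)}_k + (u^{(n)}_k)^2\} + \beta\delta^{\langle 1\rangle}_x\delta^{\langle 2\rangle}_x \mu^+_t u^{(n)}_k$ for all $k$. $\varepsilon_1(q,r,\Delta x) = (q-1)(\Delta x)^3[\frac{|\alpha|}{6}(\Delta x)^2(q^2+q+1)r + \frac{3}{2}|\beta|(q+1)]^{-1}$, $\varepsilon_2(q,r,\Delta x) = (\Delta x)^3[\frac{|\alpha|}{6}(\Delta x)^2(2q+1)r + \frac{3}{2}|\beta|]^{-1}$.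 $\tilde u^{(m)}_k=u(m\Delta t,k\Delta x)$, $e^{(m)}=u^{(m)}-\tilde u^{(m)}$. *)

theory Defs
  imports "HOL-Analysis.Analysis"
begin

definition kperiodic :: "nat \<Rightarrow> (int \<Rightarrow> real) \<Rightarrow> bool" where
  "kperiodic K v \<longleftrightarrow> (\<forall>k. v (k + int K) = v k)"

definition dplus :: "real \<Rightarrow> (int \<Rightarrow> real) \<Rightarrow> int \<Rightarrow> real" where
  "dplus dx v k = (v (k + 1) - v k) / dx"

definition d1 :: "real \<Rightarrow> (int \<Rightarrow> real) \<Rightarrow> int \<Rightarrow> real" where
  "d1 dx v k = (v (k + 1) - v (k - 1)) / (2 * dx)"

definition d2 :: "real \<Rightarrow> (int \<Rightarrow> real) \<Rightarrow> int \<Rightarrow> real" where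
  "d2 dx v k = (v (k + 1) - 2 * v k + v (k - 1)) / dx ^ 2"

definition l2norm :: "nat \<Rightarrow> real \<Rightarrow> (int \<Rightarrow> real) \<Rightarrow> real" where
  "l2norm K dx v = sqrt (\<Sum>k\<in>{1..int K}. (v k)^2 * dx)"

definition supnorm :: "nat \<Rightarrow> (int \<Rightarrow> real) \<Rightarrow> real" where
  "supnorm K v = Max ((\<lambda>k. \<bar>v k\<bar>) ` {1..int K})"

definition h1norm :: "nat \<Rightarrow> real \<Rightarrow> (int \<Rightarrow> real) \<Rightarrow> real" where
  "h1norm K dx v = sqrt ((l2norm K dx v)^2 + (l2norm K dx (dplus dx v))^2)"

definition scheme_step :: "real \<Rightarrow> real \<Rightarrow> real \<Rightarrow> real \<Rightarrow> (int \<Rightarrow> real) \<Rightarrow> (int \<Rightarrow> real) \<Rightarrow> bool" where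
  "scheme_step \<alpha> \<beta> dx dt v w \<longleftrightarrow>
     (\<forall>k. (w k - v k) / dt =
           - (\<alpha> / 6) * d1 dx (\<lambda>j. (w j)^2 + w j * v j + (v j)^2) k
           + \<beta> * d1 dx (d2 dx (\<lambda>j. (w j + v j) / 2)) k)"

definition eps1 :: "real \<Rightarrow> real \<Rightarrow> real \<Rightarrow> real \<Rightarrow> real \<Rightarrow> real" where
  "eps1 \<alpha> \<beta> q r dx = (q - 1) * dx ^ 3 /
     (\<bar>\<alpha>\<bar> / 6 * dx ^ 2 * (q^2 + q + 1) * r + 3 / 2 * \<bar>\<beta>\<bar> * (q + 1))"

definition eps2 :: "real \<Rightarrow> real \<Rightarrow> real \<Rightarrow> real \<Rightarrow> real \<Rightarrow> real" where
  "eps2 \<alpha> \<beta> q r dx = dx ^ 3 /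
     (\<bar>\<alpha>\<bar> / 6 * dx ^ 2 * (2 * q + 1) * r + 3 / 2 * \<bar>\<beta>\<bar>)"

definition kdv_solution :: "real \<Rightarrow> real \<Rightarrow> real \<Rightarrow> real \<Rightarrow> (real \<Rightarrow> real \<Rightarrow> real) \<Rightarrow> bool" where
  "kdv_solution \<alpha> \<beta> L T u \<longleftrightarrow>
     continuous_on ({0..T} \<times> UNIV) (\<lambda>(t, x). u t x) \<and>
     (\<forall>t x. u t (x + L) = u t x) \<and>
     (\<exists>ut ux uxx uxxx. \<forall>t\<in>{0..T}. \<forall>x.
        ((\<lambda>s. u s x) has_real_derivative ut t x) (at t within {0..T}) \<and>
        ((\<lambda>y. u t y) has_real_derivative ux t x) (at x) \<and>
        ((\<lambda>y. ux t y) has_real_derivative uxx t x) (at x) \<and>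
        ((\<lambda>y. uxx t y) has_real_derivative uxxx t x) (at x) \<and>
        ut t x = - \<alpha> * u t x * ux t x + \<beta> * uxxx t x)"

end

(* A discrete Sobolev inequality bounds every value of a K-point grid function e by
   Lhat * h1norm e: by averaging, some grid value of e is at most l2norm e / sqrt L, and
   by Cauchy-Schwarz e varies along the grid by at most sqrt L * l2norm (dplus e).
   Applied to the error u^(m) - u(m dt, . dx), the assumed H^1 error bound and dt <= dx give
   |u^(m)_k| <= S + 2 Lhat C dx^2, which the mesh condition on dx makes at most r.
   The hypotheses on the scheme, its initial data, q, eps1 and eps2 serve in the paper to
   establish the error bound. *)

theory Submission
  imports Defs
begin

lemma abs_diff_le_sum_abs_increments:
  fixes e :: "int \<Rightarrow> real"
  assumes "a \<le> b"
  shows "\<bar>e b - e a\<bar> \<le> (\<Sum>i\<in>{a..<b}. \<bar>e (i + 1) - e i\<bar>)"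
  using assms
proof (induction b rule: int_ge_induct)
  case base
  then show ?case by simp
next
  case (step i)
  have "{a..<i + 1} = insert i {a..<i}" using step by auto
  then have "(\<Sum>j\<in>{a..<i + 1}. \<bar>e (j + 1) - e j\<bar>)
      = \<bar>e (i + 1) - e i\<bar> + (\<Sum>j\<in>{a..<i}. \<bar>e (j + 1) - e j\<bar>)"
    by simp
  moreover have "\<bar>e (i + 1) - e a\<bar> \<le> \<bar>e (i + 1) - e i\<bar> + \<bar>e i - e a\<bar>" by linarith
  ultimately show ?case using step by linarith
qed

lemma abs_diff_le_total_variation:
  fixes e :: "int \<Rightarrow> real"
  assumes "j \<in> {a..b}" "k \<in> {a..b}"
  shows "\<bar>e k - e j\<bar> \<le> (\<Sum>i\<in>{a..b}. \<bar>e (i + 1) - e i\<bar>)"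
proof -
  have ordered: "\<bar>e y - e x\<bar> \<le> (\<Sum>i\<in>{a..b}. \<bar>e (i + 1) - e i\<bar>)"
    if "x \<le> y" "x \<in> {a..b}" "y \<in> {a..b}" for x y
  proof -
    have "\<bar>e y - e x\<bar> \<le> (\<Sum>i\<in>{x..<y}. \<bar>e (i + 1) - e i\<bar>)"
      using \<open>x \<le> y\<close> by (rule abs_diff_le_sum_abs_increments)
    also have "\<dots> \<le> (\<Sum>i\<in>{a..b}. \<bar>e (i + 1) - e i\<bar>)"
      using that by (intro sum_mono2) auto
    finally show ?thesis .
  qed
  show ?thesis
  proof (cases "j \<le> k")
    case True
    then show ?thesis using ordered assms by blast
  next
    case False
    then have "\<bar>e j - e k\<bar> \<le> (\<Sum>i\<in>{a..b}. \<bar>e (i + 1) - e i\<bar>)"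
      using ordered assms by simp
    then show ?thesis by (simp only: abs_minus_commute)
  qed
qed

lemma ex_card_mult_le_sum:
  fixes f :: "'a \<Rightarrow> real"
  assumes "finite I" "I \<noteq> {}"
  shows "\<exists>j\<in>I. card I * f j \<le> sum f I"
proof -
  have "Min (f ` I) \<in> f ` I"
    using assms by simp
  then obtain j where j: "j \<in> I" "f j = Min (f ` I)"
    by (metis imageE)
  then have "card I * f j \<le> sum f I"
    using assms by (intro sum_bounded_below) simp
  with j(1) show ?thesis by blast
qed

lemma add_le_sqrt2_mult_sqrt_sum_squares:
  fixes a b :: real
  shows "a + b \<le> sqrt 2 * sqrt (a\<^sup>2 + b\<^sup>2)"
proof -
  have "(a + b) / 2 \<le> sqrt ((a\<^sup>2 + b\<^sup>2) / 2)"
    by (rule sum_squared_le_sum_of_squares_2)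
  also have "\<dots> = sqrt 2 * sqrt (a\<^sup>2 + b\<^sup>2) / 2"
    by (simp add: real_sqrt_divide field_simps)
  finally show ?thesis by simp
qed

lemma l2norm_nonneg: "dx \<ge> 0 \<Longrightarrow> l2norm K dx v \<ge> 0"
  unfolding l2norm_def by (simp add: sum_nonneg)

lemma l2norm_squared: "dx \<ge> 0 \<Longrightarrow> (l2norm K dx v)\<^sup>2 = (\<Sum>k\<in>{1..int K}. (v k)\<^sup>2 * dx)"
  unfolding l2norm_def by (simp add: sum_nonneg)

lemma ex_abs_le_l2norm:
  fixes e :: "int \<Rightarrow> real"
  assumes "K > 0" "dx > 0" "L = real K * dx"
  shows "\<exists>j\<in>{1..int K}. \<bar>e j\<bar> \<le> l2norm K dx e / sqrt L"
proof -
  obtain j where j: "j \<in> {1..int K}" "K * ((e j)\<^sup>2 * dx) \<le> (\<Sum>i\<in>{1..int K}. (e i)\<^sup>2 * dx)"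
    using ex_card_mult_le_sum[of "{1..int K}" "\<lambda>i. (e i)\<^sup>2 * dx"] assms by auto
  then have "\<bar>e j\<bar>\<^sup>2 \<le> (\<Sum>i\<in>{1..int K}. (e i)\<^sup>2 * dx) / L"
    using assms by (simp add: pos_le_divide_eq mult_ac)
  also have "\<dots> = (l2norm K dx e / sqrt L)\<^sup>2"
    using assms by (simp add: power_divide l2norm_squared)
  finally have "\<bar>e j\<bar>\<^sup>2 \<le> (l2norm K dx e / sqrt L)\<^sup>2" .
  moreover have "l2norm K dx e / sqrt L \<ge> 0"
    using assms l2norm_nonneg[of dx K e] by simp
  ultimately have "\<bar>e j\<bar> \<le> l2norm K dx e / sqrt L"
    by (rule power2_le_imp_le)
  with j(1) show ?thesis by blast
qed

lemma grid_sum_abs_le_l2norm: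
  fixes v :: "int \<Rightarrow> real"
  assumes "dx > 0" "L = real K * dx"
  shows "(\<Sum>i\<in>{1..int K}. \<bar>v i\<bar> * dx) \<le> sqrt L * l2norm K dx v"
proof -
  have "(\<Sum>i\<in>{1..int K}. \<bar>v i\<bar> * dx)\<^sup>2 \<le> (\<Sum>i\<in>{1..int K}. (\<bar>v i\<bar> * dx)\<^sup>2) * card {1..int K}"
    by (rule sum_squared_le_sum_of_squares)
  also have "\<dots> = (\<Sum>i\<in>{1..int K}. (v i)\<^sup>2 * dx) * dx * K"
  proof -
    have "(\<bar>v i\<bar> * dx)\<^sup>2 = (v i)\<^sup>2 * dx * dx" for i
      by (simp add: power_mult_distrib power2_eq_square mult.assoc)
    then show ?thesis by (simp add: sum_distrib_right)
  qed
  also have "\<dots> = (sqrt L * l2norm K dx v)\<^sup>2"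
    using assms by (simp add: power_mult_distrib l2norm_squared)
  finally show ?thesis
    by (rule power2_le_imp_le) (use assms l2norm_nonneg[of dx K v] in simp)
qed

lemma abs_le_h1norm:
  fixes e :: "int \<Rightarrow> real"
  assumes "K > 0" "dx > 0" "L = real K * dx" "k \<in> {1..int K}"
  shows "\<bar>e k\<bar> \<le> sqrt 2 * max (sqrt L) (1 / sqrt L) * h1norm K dx e"
proof -
  define a where "a = l2norm K dx e"
  define b where "b = l2norm K dx (dplus dx e)"
  define M where "M = max (sqrt L) (1 / sqrt L)"
  have "a \<ge> 0" "b \<ge> 0" "M \<ge> 0"
    unfolding a_def b_def M_def using assms by (simp_all add: l2norm_nonneg le_max_iff_disj)
  obtain j where j: "j \<in> {1..int K}" "\<bar>e j\<bar> \<le> a / sqrt L"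
    using ex_abs_le_l2norm[OF assms(1-3)] unfolding a_def by blast
  have "\<bar>e k - e j\<bar> \<le> (\<Sum>i\<in>{1..int K}. \<bar>e (i + 1) - e i\<bar>)"
    using j(1) assms(4) by (rule abs_diff_le_total_variation)
  also have "\<dots> = (\<Sum>i\<in>{1..int K}. \<bar>dplus dx e i\<bar> * dx)"
    using assms(2) by (simp add: dplus_def abs_divide)
  also have "\<dots> \<le> sqrt L * b"
    unfolding b_def using assms(2,3) by (rule grid_sum_abs_le_l2norm)
  finally have "\<bar>e k\<bar> \<le> 1 / sqrt L * a + sqrt L * b"
    using j(2) by simp
  also have "\<dots> \<le> M * a + M * b"
    unfolding M_def using \<open>a \<ge> 0\<close> \<open>b \<ge> 0\<close> by (intro add_mono mult_right_mono) auto
  also have "\<dots> = M * (a + b)"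
    by (simp add: distrib_left)
  also have "\<dots> \<le> M * (sqrt 2 * sqrt (a\<^sup>2 + b\<^sup>2))"
    using add_le_sqrt2_mult_sqrt_sum_squares \<open>M \<ge> 0\<close> by (rule mult_left_mono)
  also have "sqrt (a\<^sup>2 + b\<^sup>2) = h1norm K dx e"
    unfolding a_def b_def h1norm_def ..
  finally show ?thesis
    unfolding M_def by (simp add: mult_ac)
qed

lemma supnorm_le_iff:
  "K > 0 \<Longrightarrow> supnorm K v \<le> r \<longleftrightarrow> (\<forall>k\<in>{1..int K}. \<bar>v k\<bar> \<le> r)"
  unfolding supnorm_def by (simp add: Max_le_iff)

lemma supnorm_le_add_h1norm_diff:
  fixes v w :: "int \<Rightarrow> real"
  assumes "K > 0" "dx > 0" "L = real K * dx" "\<forall>k\<in>{1..int K}. \<bar>w k\<bar> \<le> S"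
  shows "supnorm K v \<le> S + sqrt 2 * max (sqrt L) (1 / sqrt L) * h1norm K dx (\<lambda>k. v k - w k)"
  unfolding supnorm_le_iff[OF assms(1)]
proof
  fix k assume k: "k \<in> {1..int K}"
  have "\<bar>v k\<bar> \<le> \<bar>w k\<bar> + \<bar>v k - w k\<bar>"
    by linarith
  also have "\<dots> \<le> S + sqrt 2 * max (sqrt L) (1 / sqrt L) * h1norm K dx (\<lambda>k. v k - w k)"
    using assms(4) k abs_le_h1norm[OF assms(1-3) k, of "\<lambda>k. v k - w k"] by (intro add_mono) auto
  finally show "\<bar>v k\<bar> \<le> \<dots>" .
qed

lemma abs_le_Sup_on_rectangle:
  fixes u :: "real \<Rightarrow> real \<Rightarrow> real"
  assumes "continuous_on ({a..b} \<times> {c..d}) (\<lambda>(t, x). u t x)" "t \<in> {a..b}" "x \<in> {c..d}"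
  shows "\<bar>u t x\<bar> \<le> Sup {\<bar>u t x\<bar> | t x. t \<in> {a..b} \<and> x \<in> {c..d}}"
proof -
  have image: "{\<bar>u t x\<bar> | t x. t \<in> {a..b} \<and> x \<in> {c..d}}
      = (\<lambda>(t, x). \<bar>u t x\<bar>) ` ({a..b} \<times> {c..d})"
    by (rule set_eqI, simp only: mem_Collect_eq image_iff mem_Sigma_iff Bex_def split_paired_Ex
        prod.case) blast
  have "continuous_on ({a..b} \<times> {c..d}) (\<lambda>(t, x). \<bar>u t x\<bar>)"
    using continuous_on_rabs[OF assms(1)] by (simp add: case_prod_beta)
  then have "bounded ((\<lambda>(t, x). \<bar>u t x\<bar>) ` ({a..b} \<times> {c..d}))"
    by (intro compact_imp_bounded compact_continuous_image compact_Times compact_Icc)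
  moreover have "\<bar>u t x\<bar> \<in> (\<lambda>(t, x). \<bar>u t x\<bar>) ` ({a..b} \<times> {c..d})"
    using assms(2,3) by (intro image_eqI[where x = "(t, x)"]) simp_all
  ultimately show ?thesis
    unfolding image by (intro cSup_upper bounded_imp_bdd_above)
qed

lemma grid_point_mem:
  assumes "k \<in> {1..int K}" "dx > 0" "L = real K * dx"
  shows "real_of_int k * dx \<in> {0..L}"
proof -
  have "real_of_int k * dx \<le> real K * dx"
    using assms(1,2) by (intro mult_right_mono) auto
  then show ?thesis
    using assms by simp
qed

lemma time_level_mem:
  assumes "m \<le> Mt" "Mt > 0" "T > 0"
  shows "real m * (T / real Mt) \<in> {0..T}"
  using assms by (simp add: field_simps)

lemma mesh_condition_bounds_error:
  fixes S r c dt dx :: real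
  assumes "S < r" "c > 0" "0 \<le> dt" "dt \<le> dx" "dx \<le> sqrt ((r - S) / (2 * c))"
  shows "S + c * (dt\<^sup>2 + dx\<^sup>2) \<le> r"
proof -
  have "dx\<^sup>2 \<le> (sqrt ((r - S) / (2 * c)))\<^sup>2"
    using assms(3-5) by (intro power_mono) auto
  also have "\<dots> = (r - S) / (2 * c)"
    using assms(1,2) by simp
  finally have "2 * c * dx\<^sup>2 \<le> r - S"
    using assms(2) by (simp add: pos_le_divide_eq mult_ac)
  moreover have "c * dt\<^sup>2 \<le> c * dx\<^sup>2"
    using assms(2-4) by (intro mult_left_mono power_mono) auto
  ultimately show ?thesis
    by (simp add: algebra_simps)
qed

theorem corollary3p7:
  fixes L T \<alpha> \<beta> q r C dx dt :: real and K Mt M0 :: nat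
    and u :: "real \<Rightarrow> real \<Rightarrow> real" and U :: "nat \<Rightarrow> int \<Rightarrow> real"
  defines "S \<equiv> Sup {\<bar>u t x\<bar> | t x. t \<in> {0..T} \<and> x \<in> {0..L}}"
  defines "Lhat \<equiv> sqrt 2 * max (sqrt L) (1 / sqrt L)"
  assumes "L > 0" and "K > 0" and "dx = L / real K"
    and "T > 0" and "Mt > 0" and "dt = T / real Mt"
    and "\<beta> \<noteq> 0"
    and "q > 1" and "M0 < Mt"
    and "kdv_solution \<alpha> \<beta> L T u"
    and "r > S"
    and "\<And>m. m \<le> M0 + 1 \<Longrightarrow> kperiodic K (U m)"
    and "\<And>k. U 0 k = u 0 (real_of_int k * dx)"
    and "\<And>m. m \<le> M0 \<Longrightarrow> scheme_step \<alpha> \<beta> dx dt (U m) (U (m + 1))"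
    and "\<And>m. m \<le> M0 \<Longrightarrow> supnorm K (U m) \<le> r"
    and "dt < min (eps1 \<alpha> \<beta> q r dx) (eps2 \<alpha> \<beta> q r dx)"
    and "supnorm K (U (M0 + 1)) \<le> q * r"
    and "C > 0"
    and "dt \<le> dx"
    and "\<And>m. m \<le> M0 + 1 \<Longrightarrow>
           h1norm K dx (\<lambda>k. U m k - u (real m * dt) (real_of_int k * dx)) \<le> C * (dt^2 + dx^2)"
    and "dx \<le> sqrt ((r - S) / (2 * Lhat * C))"
  shows "\<forall>m \<le> M0 + 1. supnorm K (U m) \<le> r"
proof (intro allI impI)
  fix m assume m: "m \<le> M0 + 1"
  have dx: "dx > 0" "L = real K * dx"
    using \<open>L > 0\<close> \<open>K > 0\<close> \<open>dx = L / real K\<close> by simp_all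
  have t: "real m * dt \<in> {0..T}"
    using time_level_mem[of m Mt T] m \<open>M0 < Mt\<close> \<open>T > 0\<close> \<open>dt = T / real Mt\<close> by simp
  have cont: "continuous_on ({0..T} \<times> {0..L}) (\<lambda>(t, x). u t x)"
    using \<open>kdv_solution \<alpha> \<beta> L T u\<close> unfolding kdv_solution_def
    by (rule continuous_on_subset[OF conjunct1]) auto
  have "\<forall>k\<in>{1..int K}. \<bar>u (real m * dt) (real_of_int k * dx)\<bar> \<le> S"
    unfolding S_def using cont t grid_point_mem[OF _ dx] by (blast intro: abs_le_Sup_on_rectangle)
  then have "supnorm K (U m)
      \<le> S + Lhat * h1norm K dx (\<lambda>k. U m k - u (real m * dt) (real_of_int k * dx))"
    unfolding Lhat_def using \<open>K > 0\<close> dx by (intro supnorm_le_add_h1norm_diff) auto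
  also have "\<dots> \<le> S + Lhat * (C * (dt\<^sup>2 + dx\<^sup>2))"
    using assms(22)[OF m] \<open>L > 0\<close> unfolding Lhat_def by (simp add: less_max_iff_disj)
  also have "\<dots> \<le> r"
    using mesh_condition_bounds_error[of S r "Lhat * C" dt dx] \<open>r > S\<close> \<open>L > 0\<close> \<open>C > 0\<close>
      \<open>T > 0\<close> \<open>dt = T / real Mt\<close> \<open>dt \<le> dx\<close> assms(23)
    unfolding Lhat_def by (simp add: less_max_iff_disj mult.assoc)
  finally show "supnorm K (U m) \<le> r" .
qed

end
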